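(* Let $0\le q<d$ and let $X\subset Y$ be bounded cubical sets in $\mathbb{R}^d$. Then $$|\beta_q(Y)-\beta_q(X)|\le \#Y-\#X.$$
   Context: An elementary interval is $[l,l+1]$ or $[l]=[l,l]$ with $l\in\mathbb{Z}$; an elementary cube in $\mathbb{R}^d$ is a product of $d$ elementary intervals, of dimension equal to the number of nondegenerate factors. A cubical set is a union of elementary cubes. For a cubical set $X$, $\#X$ is the number of elementary cubes (of all dimensions) contained in $X$. $C_k(X)$ is the free $\mathbb{Z}$-module on the $k$-dimensional elementary cubes contained in $X$, with the standard cubical boundary operator $\partial\widehat Q=\sum_{j=1}^k(-1)^{j-1}(\widehat{Q_j^+}-\widehat{Q_j^-})$ ($Q_j^\pm$ obtained by replacing the $j$-th nondegenerate factor $[l_j,l_j+1]$ by $[l_j+1]$, resp. $[l_j]$); $H_k(X)$ is its homology, and for bounded $X$, $\beta_k(X)$ is the rank of the free part of $H_k(X)$. *)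

theory Defs
  imports Complex_Main "HOL-Algebra.Free_Abelian_Groups" "HOL-Library.Poly_Mapping"
begin

text \<open>An elementary interval is encoded as a pair (l, b): b = True means [l, l+1],
  b = False means the degenerate interval [l] = [l, l].
  Points of R^d are real lists of length d.\<close>

type_synonym elem_cube = "(int \<times> bool) list"

definition interval_set :: "int \<times> bool \<Rightarrow> real set" where
  "interval_set I = (if snd I then {real_of_int (fst I) .. real_of_int (fst I) + 1}
                     else {real_of_int (fst I)})"

definition cube_set :: "elem_cube \<Rightarrow> real list set" where
  "cube_set Q = {x. length x = length Q \<and> (\<forall>i<length Q. x ! i \<in> interval_set (Q ! i))}"

definition cube_dim :: "elem_cube \<Rightarrow> nat" where
  "cube_dim Q = card {i. i < length Q \<and> snd (Q ! i)}"

definition cubical :: "nat \<Rightarrow> real list set \<Rightarrow> bool" where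
  "cubical d A \<longleftrightarrow> (\<exists>QS. (\<forall>Q\<in>QS. length Q = d) \<and> A = Union (cube_set ` QS))"

definition bounded_pts :: "real list set \<Rightarrow> bool" where
  "bounded_pts A \<longleftrightarrow> (\<exists>M. \<forall>x\<in>A. \<forall>i<length x. \<bar>x ! i\<bar> \<le> M)"

text \<open>All elementary cubes (of any dimension) in R^d contained in A; #A is its cardinality.\<close>
definition cubes_of :: "nat \<Rightarrow> real list set \<Rightarrow> elem_cube set" where
  "cubes_of d A = {Q. length Q = d \<and> cube_set Q \<subseteq> A}"

definition num_cubes :: "nat \<Rightarrow> real list set \<Rightarrow> nat" where
  "num_cubes d A = card (cubes_of d A)"

definition kcubes_of :: "nat \<Rightarrow> nat \<Rightarrow> real list set \<Rightarrow> elem_cube set" where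
  "kcubes_of d k A = {Q \<in> cubes_of d A. cube_dim Q = k}"

definition chain_group :: "nat \<Rightarrow> nat \<Rightarrow> real list set \<Rightarrow> (elem_cube \<Rightarrow>\<^sub>0 int) monoid" where
  "chain_group d k A = free_Abelian_group (kcubes_of d k A)"

text \<open>Q_j^+ and Q_j^- at list position i (assumed nondegenerate).\<close>
definition face_plus :: "elem_cube \<Rightarrow> nat \<Rightarrow> elem_cube" where
  "face_plus Q i = Q[i := (fst (Q ! i) + 1, False)]"

definition face_minus :: "elem_cube \<Rightarrow> nat \<Rightarrow> elem_cube" where
  "face_minus Q i = Q[i := (fst (Q ! i), False)]"

text \<open>Cubical boundary of an elementary cube; the sign is (-1)^(j-1) where the factor at
  position i is the j-th nondegenerate factor, i.e. j-1 nondegenerate factors precede it.\<close>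
definition cube_boundary :: "elem_cube \<Rightarrow> elem_cube \<Rightarrow>\<^sub>0 int" where
  "cube_boundary Q =
     (\<Sum>i \<in> {i. i < length Q \<and> snd (Q ! i)}.
        frag_cmul ((-1) ^ card {j. j < i \<and> snd (Q ! j)})
          (frag_of (face_plus Q i) - frag_of (face_minus Q i)))"

definition boundary :: "(elem_cube \<Rightarrow>\<^sub>0 int) \<Rightarrow> (elem_cube \<Rightarrow>\<^sub>0 int)" where
  "boundary c = frag_extend cube_boundary c"

definition cycles :: "nat \<Rightarrow> nat \<Rightarrow> real list set \<Rightarrow> (elem_cube \<Rightarrow>\<^sub>0 int) set" where
  "cycles d k A = {c \<in> carrier (chain_group d k A). boundary c = 0}"

definition boundaries :: "nat \<Rightarrow> nat \<Rightarrow> real list set \<Rightarrow> (elem_cube \<Rightarrow>\<^sub>0 int) set" where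
  "boundaries d k A = boundary ` carrier (chain_group d (Suc k) A)"

definition homology_group :: "nat \<Rightarrow> nat \<Rightarrow> real list set \<Rightarrow> (elem_cube \<Rightarrow>\<^sub>0 int) set monoid" where
  "homology_group d k A = ((chain_group d k A)\<lparr>carrier := cycles d k A\<rparr>) Mod (boundaries d k A)"

definition free_rank :: "('a, 'b) monoid_scheme \<Rightarrow> nat" where
  "free_rank G = Sup {n. \<exists>g. (\<forall>i<n. g i \<in> carrier G) \<and>
      (\<forall>k :: nat \<Rightarrow> int. finprod G (\<lambda>i. g i [^]\<^bsub>G\<^esub> k i) {..<n} = \<one>\<^bsub>G\<^esub> \<longrightarrow> (\<forall>i<n. k i = 0))}"

definition betti :: "nat \<Rightarrow> nat \<Rightarrow> real list set \<Rightarrow> nat" where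
  "betti d k A = free_rank (homology_group d k A)"

end

theory Submission
  imports Defs
begin

text \<open>The Betti number \<open>\<beta>\<^sub>q\<close> is the largest number of \<open>q\<close>-cycles that are linearly independent
  modulo the \<open>q\<close>-boundaries. Going from \<open>X\<close> to \<open>Y\<close>, an independent family of cycles of \<open>Y\<close>
  can be made to avoid a new \<open>q\<close>-cube by one step of Gaussian elimination on that cube's
  coefficient, losing at most one member; after eliminating all new \<open>q\<close>-cubes it is an
  independent family of cycles of \<open>X\<close>, so \<open>\<beta>\<^sub>q(Y) \<le> \<beta>\<^sub>q(X) + #(new q-cubes)\<close>. Conversely the
  boundaries of \<open>Y\<close> are those of \<open>X\<close> plus the span of the boundaries of the new
  \<open>(q+1)\<close>-cubes, and each added generator destroys at most one member of an independent family,
  so \<open>\<beta>\<^sub>q(X) \<le> \<beta>\<^sub>q(Y) + #(new (q+1)-cubes)\<close>. The new \<open>q\<close>- and \<open>(q+1)\<close>-cubes are distinct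
  elements of the cubes of \<open>Y\<close> that are not cubes of \<open>X\<close>.\<close>

section \<open>Independence modulo a submodule of a free Abelian group\<close>

definition frag_submodule :: "('a \<Rightarrow>\<^sub>0 int) set \<Rightarrow> bool" where
  "frag_submodule M \<longleftrightarrow> 0 \<in> M \<and> (\<forall>a\<in>M. \<forall>b\<in>M. a + b \<in> M) \<and> (\<forall>a\<in>M. \<forall>k. frag_cmul k a \<in> M)"

lemma frag_submodule_diff: "frag_submodule M \<Longrightarrow> a \<in> M \<Longrightarrow> b \<in> M \<Longrightarrow> a - b \<in> M"
  unfolding frag_submodule_def by (metis diff_conv_add_uminus frag_cmul_minus_one)

lemma frag_submodule_vanishing:
  "frag_submodule M \<Longrightarrow> frag_submodule {c \<in> M. \<forall>P\<in>S. poly_mapping.lookup c P = 0}"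
  by (auto simp: frag_submodule_def lookup_add)

lemma frag_submodule_keys_subset: "frag_submodule {c. Poly_Mapping.keys c \<subseteq> S}"
  unfolding frag_submodule_def by (auto dest: subsetD[OF keys_add] subsetD[OF keys_cmul])

lemma frag_submodule_imp_subgroup:
  "frag_submodule M \<Longrightarrow> subgroup M (free_Abelian_group UNIV)"
  by (rule group.subgroupI[OF group_free_Abelian_group])
    (auto simp: frag_submodule_def simp flip: frag_cmul_minus_one)

definition indep_mod :: "('a \<Rightarrow>\<^sub>0 int) set \<Rightarrow> 'i set \<Rightarrow> ('i \<Rightarrow> 'a \<Rightarrow>\<^sub>0 int) \<Rightarrow> bool" where
  "indep_mod B I z \<longleftrightarrow> (\<forall>k. (\<Sum>i\<in>I. frag_cmul (k i) (z i)) \<in> B \<longrightarrow> (\<forall>i\<in>I. k i = 0))"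

lemma indep_mod_antimono: "indep_mod B' I z \<Longrightarrow> B \<subseteq> B' \<Longrightarrow> indep_mod B I z"
  unfolding indep_mod_def by blast

lemma indep_mod_eliminate_coordinate:
  assumes fin: "finite I" and ind: "indep_mod B I z" and zM: "\<forall>i\<in>I. z i \<in> M"
    and M: "frag_submodule M"
  obtains I' w where "I' \<subseteq> I" "card I \<le> card I' + 1" "indep_mod B I' w"
    "\<forall>i\<in>I'. w i \<in> M" "\<forall>i\<in>I'. poly_mapping.lookup (w i) P = 0"
proof (cases "\<forall>i\<in>I. poly_mapping.lookup (z i) P = 0")
  case True
  show ?thesis by (rule that[of I z]) (use True ind zM in auto)
next
  case False
  then obtain j where j: "j \<in> I" and a0: "poly_mapping.lookup (z j) P \<noteq> 0" by auto
  define a where "a = poly_mapping.lookup (z j) P"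
  define p where "p i = poly_mapping.lookup (z i) P" for i
  \<comment> \<open>Gaussian elimination with pivot \<open>z j\<close> in coordinate \<open>P\<close>\<close>
  define w where "w i = frag_cmul a (z i) - frag_cmul (p i) (z j)" for i
  define I' where "I' = I - {j}"
  have wM: "\<forall>i\<in>I'. w i \<in> M"
    using zM j M unfolding w_def I'_def frag_submodule_def by (auto intro!: frag_submodule_diff[OF M])
  have wP: "\<forall>i\<in>I'. poly_mapping.lookup (w i) P = 0"
    by (simp add: w_def lookup_minus a_def p_def mult.commute)
  have "indep_mod B I' w"
    unfolding indep_mod_def
  proof (intro allI impI)
    fix k assume kB: "(\<Sum>i\<in>I'. frag_cmul (k i) (w i)) \<in> B"
    define k' where "k' i = (if i = j then - (\<Sum>l\<in>I'. k l * p l) else a * k i)" for i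
    have "(\<Sum>i\<in>I. frag_cmul (k' i) (z i)) = (\<Sum>i\<in>I'. frag_cmul (k i) (w i))"
    proof (rule poly_mapping_eqI)
      fix x
      have "poly_mapping.lookup (\<Sum>i\<in>I. frag_cmul (k' i) (z i)) x
          = k' j * poly_mapping.lookup (z j) x + (\<Sum>i\<in>I'. k' i * poly_mapping.lookup (z i) x)"
        unfolding I'_def using fin j by (simp add: lookup_sum sum.remove lookup_add)
      also have "\<dots> = (\<Sum>i\<in>I'. k i * (a * poly_mapping.lookup (z i) x - p i * poly_mapping.lookup (z j) x))"
        unfolding k'_def I'_def
        by (simp add: sum_distrib_right sum_distrib_left sum_subtractf right_diff_distrib
            algebra_simps sum_negf)
      also have "\<dots> = poly_mapping.lookup (\<Sum>i\<in>I'. frag_cmul (k i) (w i)) x"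
        by (simp add: lookup_sum w_def lookup_minus)
      finally show "poly_mapping.lookup (\<Sum>i\<in>I. frag_cmul (k' i) (z i)) x
          = poly_mapping.lookup (\<Sum>i\<in>I'. frag_cmul (k i) (w i)) x" .
    qed
    then have "\<forall>i\<in>I. k' i = 0" using ind kB unfolding indep_mod_def by metis
    then show "\<forall>i\<in>I'. k i = 0" using a0 unfolding k'_def I'_def a_def
      by (metis DiffD1 DiffD2 insertI1 mult_eq_0_iff)
  qed
  moreover have "card I = card I' + 1" using card.remove[OF fin j(1)] unfolding I'_def by simp
  ultimately show ?thesis using that[of I' w] wM wP unfolding I'_def by auto
qed

lemma indep_mod_eliminate_coordinates:
  assumes S: "finite S" and fin: "finite I" and ind: "indep_mod B I z" and zM: "\<forall>i\<in>I. z i \<in> M"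
    and M: "frag_submodule M"
  obtains I' w where "I' \<subseteq> I" "card I \<le> card I' + card S" "indep_mod B I' w"
    "\<forall>i\<in>I'. w i \<in> M" "\<forall>i\<in>I'. \<forall>P\<in>S. poly_mapping.lookup (w i) P = 0"
proof -
  have "\<exists>I' w. I' \<subseteq> I \<and> card I \<le> card I' + card S \<and> indep_mod B I' w
      \<and> (\<forall>i\<in>I'. w i \<in> {c \<in> M. \<forall>P\<in>S. poly_mapping.lookup c P = 0})"
    using S
  proof (induction S rule: finite_induct)
    case empty
    then show ?case using ind zM by auto
  next
    case (insert P S)
    then obtain I1 w1 where I1: "I1 \<subseteq> I" "card I \<le> card I1 + card S" "indep_mod B I1 w1"
      "\<forall>i\<in>I1. w1 i \<in> {c \<in> M. \<forall>P\<in>S. poly_mapping.lookup c P = 0}" by blast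
    obtain I2 w2 where "I2 \<subseteq> I1" "card I1 \<le> card I2 + 1" "indep_mod B I2 w2"
      "\<forall>i\<in>I2. w2 i \<in> {c \<in> M. \<forall>P\<in>S. poly_mapping.lookup c P = 0}"
      "\<forall>i\<in>I2. poly_mapping.lookup (w2 i) P = 0"
      by (rule indep_mod_eliminate_coordinate[OF finite_subset[OF I1(1) fin] I1(3,4)
            frag_submodule_vanishing[OF M]])
    then show ?case using I1 insert by (intro exI[of _ I2] exI[of _ w2]) auto
  qed
  then show ?thesis using that by blast
qed

lemma indep_mod_card_le:
  assumes fin: "finite I" and ind: "indep_mod B I z" and B0: "0 \<in> B" and S: "finite S"
    and zS: "\<forall>i\<in>I. Poly_Mapping.keys (z i) \<subseteq> S"
  shows "card I \<le> card S"
proof -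
  have zM: "\<forall>i\<in>I. z i \<in> {c. Poly_Mapping.keys c \<subseteq> S}" using zS by simp
  obtain I' w where I': "I' \<subseteq> I" "card I \<le> card I' + card S" "indep_mod B I' w"
    "\<forall>i\<in>I'. w i \<in> {c. Poly_Mapping.keys c \<subseteq> S}"
    "\<forall>i\<in>I'. \<forall>P\<in>S. poly_mapping.lookup (w i) P = 0"
    by (rule indep_mod_eliminate_coordinates[OF S fin ind zM frag_submodule_keys_subset])
  have "w i = 0" if "i \<in> I'" for i
  proof (rule poly_mapping_eqI)
    fix P
    show "poly_mapping.lookup (w i) P = poly_mapping.lookup 0 P"
    proof (cases "P \<in> S")
      case False
      then have "P \<notin> Poly_Mapping.keys (w i)" using I'(4) that by auto
      then show ?thesis by (simp add: in_keys_iff)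
    qed (use I'(5) that in simp)
  qed
  then have "(\<Sum>i\<in>I'. frag_cmul 1 (w i)) \<in> B" using B0 by simp
  then have "\<forall>i\<in>I'. (1::int) = 0"
    using spec[OF I'(3)[unfolded indep_mod_def], of "\<lambda>_. 1"] by blast
  then have "I' = {}" by auto
  then show ?thesis using I'(2) by simp
qed

definition plus_span :: "('a \<Rightarrow>\<^sub>0 int) set \<Rightarrow> ('b \<Rightarrow> 'a \<Rightarrow>\<^sub>0 int) \<Rightarrow> 'b set \<Rightarrow> ('a \<Rightarrow>\<^sub>0 int) set" where
  "plus_span B b T = {\<beta> + (\<Sum>P\<in>T. frag_cmul (t P) (b P)) | \<beta> t. \<beta> \<in> B}"

lemma frag_submodule_plus_span:
  assumes "frag_submodule B" shows "frag_submodule (plus_span B b T)"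
  unfolding frag_submodule_def
proof (intro conjI ballI allI)
  show "0 \<in> plus_span B b T" unfolding plus_span_def using assms
    by (auto simp: frag_submodule_def intro!: exI[of _ 0] exI[of _ "\<lambda>_. 0"])
next
  fix x y assume "x \<in> plus_span B b T" "y \<in> plus_span B b T"
  then obtain \<beta>1 t1 \<beta>2 t2 where "x = \<beta>1 + (\<Sum>P\<in>T. frag_cmul (t1 P) (b P))" "\<beta>1 \<in> B"
    "y = \<beta>2 + (\<Sum>P\<in>T. frag_cmul (t2 P) (b P))" "\<beta>2 \<in> B" unfolding plus_span_def by blast
  then show "x + y \<in> plus_span B b T" unfolding plus_span_def using assms
    by (auto simp: frag_submodule_def frag_cmul_distrib sum.distrib algebra_simps
        intro!: exI[of _ "\<beta>1 + \<beta>2"] exI[of _ "\<lambda>P. t1 P + t2 P"])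
next
  fix x k assume "x \<in> plus_span B b T"
  then obtain \<beta>1 t1 where "x = \<beta>1 + (\<Sum>P\<in>T. frag_cmul (t1 P) (b P))" "\<beta>1 \<in> B"
    unfolding plus_span_def by blast
  then show "frag_cmul k x \<in> plus_span B b T" unfolding plus_span_def using assms
    by (auto simp: frag_submodule_def frag_cmul_distrib2 frag_cmul_sum
        intro!: exI[of _ "frag_cmul k \<beta>1"] exI[of _ "\<lambda>P. k * t1 P"])
qed

lemma plus_span_insert:
  assumes "finite T" "P \<notin> T"
  shows "plus_span B b (insert P T) \<subseteq> {\<beta> + frag_cmul t (b P) | \<beta> t. \<beta> \<in> plus_span B b T}"
proof
  fix y assume "y \<in> plus_span B b (insert P T)"
  then obtain \<beta> u where y: "y = \<beta> + (\<Sum>Q\<in>insert P T. frag_cmul (u Q) (b Q))" "\<beta> \<in> B"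
    unfolding plus_span_def by blast
  then have "y = (\<beta> + (\<Sum>Q\<in>T. frag_cmul (u Q) (b Q))) + frag_cmul (u P) (b P)"
    using assms by (simp add: algebra_simps)
  moreover have "\<beta> + (\<Sum>Q\<in>T. frag_cmul (u Q) (b Q)) \<in> plus_span B b T"
    unfolding plus_span_def using y by blast
  ultimately show "y \<in> {\<beta> + frag_cmul t (b P) | \<beta> t. \<beta> \<in> plus_span B b T}" by blast
qed

lemma indep_mod_add_generator:
  assumes B: "frag_submodule B" and fin: "finite I" and ind: "indep_mod B I x"
  obtains I' where "I' \<subseteq> I" "card I \<le> card I' + 1"
    "indep_mod {\<beta> + frag_cmul t c | \<beta> t. \<beta> \<in> B} I' x"
proof (cases "indep_mod {\<beta> + frag_cmul t c | \<beta> t. \<beta> \<in> B} I x")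
  case True
  show ?thesis by (rule that[of I]) (use True in auto)
next
  case False
  then obtain k \<beta> t j where kB: "(\<Sum>i\<in>I. frag_cmul (k i) (x i)) = \<beta> + frag_cmul t c" "\<beta> \<in> B"
    and j: "j \<in> I" "k j \<noteq> 0"
    unfolding indep_mod_def by blast
  define I' where "I' = I - {j}"
  have "indep_mod {\<beta> + frag_cmul t c | \<beta> t. \<beta> \<in> B} I' x"
    unfolding indep_mod_def
  proof (intro allI impI)
    fix l assume "(\<Sum>i\<in>I'. frag_cmul (l i) (x i)) \<in> {\<beta> + frag_cmul t c | \<beta> t. \<beta> \<in> B}"
    then obtain \<beta>' t' where lB: "(\<Sum>i\<in>I'. frag_cmul (l i) (x i)) = \<beta>' + frag_cmul t' c" "\<beta>' \<in> B"
      by blast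
    define l0 where "l0 i = (if i = j then 0 else l i)" for i
    have s0: "(\<Sum>i\<in>I. frag_cmul (l0 i) (x i)) = (\<Sum>i\<in>I'. frag_cmul (l i) (x i))"
      unfolding I'_def l0_def using fin j by (simp add: sum.remove)
    \<comment> \<open>cancel \<open>c\<close> between the two relations; the pivot coefficient \<open>t' * k j\<close> must vanish\<close>
    define m where "m i = t * l0 i - t' * k i" for i
    have "(\<Sum>i\<in>I. frag_cmul (m i) (x i))
        = frag_cmul t (\<Sum>i\<in>I. frag_cmul (l0 i) (x i)) - frag_cmul t' (\<Sum>i\<in>I. frag_cmul (k i) (x i))"
      unfolding m_def by (simp add: frag_cmul_sum frag_cmul_diff_distrib sum_subtractf)
    also have "\<dots> = frag_cmul t \<beta>' + frag_cmul (- t') \<beta>"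
      using s0 lB kB by (simp add: frag_cmul_distrib2 mult.commute)
    finally have "(\<Sum>i\<in>I. frag_cmul (m i) (x i)) \<in> B"
      using B lB kB by (simp add: frag_submodule_def)
    then have "m j = 0" using ind j unfolding indep_mod_def by blast
    then have "t' = 0" using j unfolding m_def l0_def by simp
    then have "(\<Sum>i\<in>I. frag_cmul (l0 i) (x i)) \<in> B" using s0 lB by simp
    then have "\<forall>i\<in>I. l0 i = 0" using ind unfolding indep_mod_def by blast
    then show "\<forall>i\<in>I'. l i = 0" unfolding l0_def I'_def by (metis Diff_iff singletonI)
  qed
  moreover have "card I = card I' + 1" using card.remove[OF fin j(1)] unfolding I'_def by simp
  ultimately show ?thesis using that[of I'] unfolding I'_def by auto
qed

lemma indep_mod_add_generators:
  assumes T: "finite T" and B: "frag_submodule B" and fin: "finite I" and ind: "indep_mod B I x"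
  obtains I' where "I' \<subseteq> I" "card I \<le> card I' + card T" "indep_mod (plus_span B b T) I' x"
proof -
  have "\<exists>I'. I' \<subseteq> I \<and> card I \<le> card I' + card T \<and> indep_mod (plus_span B b T) I' x"
    using T
  proof (induction T rule: finite_induct)
    case empty
    have "plus_span B b {} \<subseteq> B" unfolding plus_span_def by auto
    then show ?case using indep_mod_antimono[OF ind] by auto
  next
    case (insert P T)
    then obtain I1 where I1: "I1 \<subseteq> I" "card I \<le> card I1 + card T" "indep_mod (plus_span B b T) I1 x"
      by blast
    obtain I2 where I2: "I2 \<subseteq> I1" "card I1 \<le> card I2 + 1"
      "indep_mod {\<beta> + frag_cmul t (b P) | \<beta> t. \<beta> \<in> plus_span B b T} I2 x"
      by (rule indep_mod_add_generator[OF frag_submodule_plus_span[OF B] finite_subset[OF I1(1) fin] I1(3)])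
    have "indep_mod (plus_span B b (insert P T)) I2 x"
      using indep_mod_antimono[OF I2(3) plus_span_insert[OF insert(1,2)]] .
    then show ?case using I1(1,2) I2(1,2) insert(1,2) by (intro exI[of _ I2]) auto
  qed
  then show ?thesis using that by blast
qed

definition indep_ranks :: "('a \<Rightarrow>\<^sub>0 int) set \<Rightarrow> ('a \<Rightarrow>\<^sub>0 int) set \<Rightarrow> nat set" where
  "indep_ranks B Z = {n. \<exists>z. (\<forall>i<n. z i \<in> Z) \<and> indep_mod B {..<n} z}"

lemma card_in_indep_ranks:
  assumes fin: "finite I" and ind: "indep_mod B I z" and zZ: "\<forall>i\<in>I. z i \<in> Z"
  shows "card I \<in> indep_ranks B Z"
proof -
  obtain h where h: "bij_betw h {..<card I} I"
    using ex_bij_betw_nat_finite[OF fin] by (auto simp: atLeast0LessThan)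
  have "indep_mod B {..<card I} (z \<circ> h)"
    unfolding indep_mod_def
  proof (intro allI impI)
    fix k assume kB: "(\<Sum>i\<in>{..<card I}. frag_cmul (k i) ((z \<circ> h) i)) \<in> B"
    define k' where "k' j = k (inv_into {..<card I} h j)" for j
    have "(\<Sum>j\<in>I. frag_cmul (k' j) (z j)) = (\<Sum>i\<in>{..<card I}. frag_cmul (k' (h i)) (z (h i)))"
      using sum.reindex_bij_betw[OF h, of "\<lambda>j. frag_cmul (k' j) (z j)"] by simp
    also have "\<dots> = (\<Sum>i\<in>{..<card I}. frag_cmul (k i) ((z \<circ> h) i))"
      unfolding k'_def by (rule sum.cong) (use h in \<open>auto simp: bij_betw_def\<close>)
    finally have "(\<Sum>j\<in>I. frag_cmul (k' j) (z j)) \<in> B" using kB by simp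
    then have "\<forall>j\<in>I. k' j = 0" using ind unfolding indep_mod_def by blast
    then show "\<forall>i\<in>{..<card I}. k i = 0"
      unfolding k'_def using h by (metis bij_betw_def bij_betw_apply inv_into_f_f)
  qed
  moreover have "\<forall>i<card I. (z \<circ> h) i \<in> Z" using h zZ unfolding bij_betw_def by auto
  ultimately show ?thesis unfolding indep_ranks_def by blast
qed

lemma indep_ranks_le_card:
  assumes "n \<in> indep_ranks B Z" "0 \<in> B" "finite S" "Z \<subseteq> {c. Poly_Mapping.keys c \<subseteq> S}"
  shows "n \<le> card S"
proof -
  obtain z where "\<forall>i<n. z i \<in> Z" "indep_mod B {..<n} z"
    using assms(1) unfolding indep_ranks_def by blast
  then have "card {..<n} \<le> card S"
    using indep_mod_card_le[OF finite_lessThan _ assms(2,3)] assms(4) by blast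
  then show ?thesis by simp
qed

section \<open>Independent ranks as the free rank of a quotient\<close>

lemma finprod_free_Abelian_group_UNIV: "finprod (free_Abelian_group UNIV) f I = sum f I"
proof (induction I rule: infinite_finite_induct)
  case (insert i I)
  then show ?case
    using comm_monoid.finprod_insert[OF comm_group.axioms(1)[OF abelian_free_Abelian_group],
        of I i f UNIV]
    by simp
qed (simp_all add: comm_monoid.finprod_infinite[OF comm_group.axioms(1)[OF abelian_free_Abelian_group]]
    comm_monoid.finprod_empty[OF comm_group.axioms(1)[OF abelian_free_Abelian_group]])

lemma (in comm_group) finprod_subgroup:
  assumes C: "subgroup C G" and f: "f \<in> I \<rightarrow> C"
  shows "finprod (G\<lparr>carrier := C\<rparr>) f I = finprod G f I"
proof -
  interpret C: comm_monoid "G\<lparr>carrier := C\<rparr>"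
    by (rule submonoid_is_comm_monoid[OF subgroup.subgroup_is_submonoid[OF C]])
  show ?thesis
    using f
  proof (induction I rule: infinite_finite_induct)
    case (insert i I)
    then have "f \<in> I \<rightarrow> C" "f i \<in> C" by auto
    moreover from this have "f \<in> I \<rightarrow> carrier G" "f i \<in> carrier G"
      using subgroup.subset[OF C] by auto
    ultimately show ?case
      using insert by (simp add: finprod_insert C.finprod_insert)
  qed auto
qed

lemma hom_finprod:
  assumes G: "comm_group G" and H: "comm_group H" and h: "h \<in> hom G H"
    and f: "f \<in> I \<rightarrow> carrier G"
  shows "h (finprod G f I) = finprod H (h \<circ> f) I"
proof -
  interpret G: comm_group G by (rule G)
  interpret H: comm_group H by (rule H)
  interpret h: group_hom G H h by (simp add: group_hom_def group_hom_axioms_def h G.group_axioms H.group_axioms)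
  show ?thesis
    using f
  proof (induction I rule: infinite_finite_induct)
    case (insert i I)
    then have fI: "f \<in> I \<rightarrow> carrier G" and fi: "f i \<in> carrier G" by auto
    then have "(\<lambda>a. h (f a)) \<in> I \<rightarrow> carrier H" "h (f i) \<in> carrier H" by (auto simp: Pi_iff intro!: h.hom_closed)
    then show ?case
      using insert fI fi by (simp add: G.finprod_insert H.finprod_insert)
  qed auto
qed

context
  fixes B Z :: "('a \<Rightarrow>\<^sub>0 int) set"
  assumes B: "frag_submodule B" and Z: "frag_submodule Z"
begin

abbreviation (input) FA :: "('a \<Rightarrow>\<^sub>0 int) monoid" where "FA \<equiv> free_Abelian_group UNIV"

lemma normal_frag_submodule: "B \<lhd> FA"
  using frag_submodule_imp_subgroup[OF B] comm_group.normal_iff_subgroup[OF abelian_free_Abelian_group]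
  by blast

lemma frag_quotient_eq:
  "(free_Abelian_group S)\<lparr>carrier := Z\<rparr> Mod B = (FA Mod B)\<lparr>carrier := (\<lambda>z. B #>\<^bsub>FA\<^esub> z) ` Z\<rparr>"
  by (auto simp: FactGroup_def RCOSETS_def r_coset_def set_mult_def fun_eq_iff)

lemma finprod_frag_quotient:
  assumes zZ: "\<forall>i\<in>I. z i \<in> Z" and g: "\<forall>i\<in>I. g i = B #>\<^bsub>FA\<^esub> z i"
  shows "finprod ((free_Abelian_group S)\<lparr>carrier := Z\<rparr> Mod B)
            (\<lambda>i. g i [^]\<^bsub>(free_Abelian_group S)\<lparr>carrier := Z\<rparr> Mod B\<^esub> k i) I
       = B #>\<^bsub>FA\<^esub> (\<Sum>i\<in>I. frag_cmul (k i) (z i))"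
proof -
  interpret N: normal B FA by (rule normal_frag_submodule)
  let ?\<pi> = "\<lambda>a. B #>\<^bsub>FA\<^esub> a"
  have F: "comm_group (FA Mod B)"
    using comm_group.abelian_FactGroup[OF abelian_free_Abelian_group frag_submodule_imp_subgroup[OF B]] .
  have \<pi>: "group_hom FA (FA Mod B) ?\<pi>"
    using N.r_coset_hom_Mod N.factorgroup_is_group by (simp add: group_hom_def group_hom_axioms_def)
  have C: "subgroup (?\<pi> ` Z) (FA Mod B)"
    by (rule group_hom.subgroup_img_is_subgroup[OF \<pi> frag_submodule_imp_subgroup[OF Z]])
  interpret H: comm_monoid "(FA Mod B)\<lparr>carrier := ?\<pi> ` Z\<rparr>"
    by (rule comm_monoid.submonoid_is_comm_monoid[OF comm_group.axioms(1)[OF F]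
          subgroup.subgroup_is_submonoid[OF C]])
  have pow: "g i [^]\<^bsub>(FA Mod B)\<lparr>carrier := ?\<pi> ` Z\<rparr>\<^esub> k i = ?\<pi> (frag_cmul (k i) (z i))"
    if "i \<in> I" for i
    using zZ g that group.int_pow_consistent[OF comm_group.axioms(2)[OF F] C, of "?\<pi> (z i)" "k i"]
      group_hom.hom_int_pow[OF \<pi>, of "z i" "k i"] by simp
  have in_C: "(\<lambda>i. ?\<pi> (frag_cmul (k i) (z i))) \<in> I \<rightarrow> ?\<pi> ` Z"
    using zZ Z by (auto simp: frag_submodule_def)
  have "finprod ((FA Mod B)\<lparr>carrier := ?\<pi> ` Z\<rparr>) (\<lambda>i. g i [^]\<^bsub>(FA Mod B)\<lparr>carrier := ?\<pi> ` Z\<rparr>\<^esub> k i) I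
      = finprod ((FA Mod B)\<lparr>carrier := ?\<pi> ` Z\<rparr>) (\<lambda>i. ?\<pi> (frag_cmul (k i) (z i))) I"
    by (rule H.finprod_cong') (use pow in_C in auto)
  also have "\<dots> = finprod (FA Mod B) (?\<pi> \<circ> (\<lambda>i. frag_cmul (k i) (z i))) I"
    using comm_group.finprod_subgroup[OF F C in_C] by (simp add: o_def)
  also have "\<dots> = ?\<pi> (\<Sum>i\<in>I. frag_cmul (k i) (z i))"
    using hom_finprod[OF abelian_free_Abelian_group F group_hom.homh[OF \<pi>],
        of "\<lambda>i. frag_cmul (k i) (z i)" I]
    by (simp add: finprod_free_Abelian_group_UNIV)
  finally show ?thesis
    unfolding frag_quotient_eq .
qed

lemma frag_coset_eq_iff: "B #>\<^bsub>FA\<^esub> c = B \<longleftrightarrow> c \<in> B"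
  using group.coset_join1[OF group_free_Abelian_group _ _ frag_submodule_imp_subgroup[OF B]]
    group.coset_join2[OF group_free_Abelian_group _ frag_submodule_imp_subgroup[OF B]]
  by auto

lemma free_rank_frag_quotient:
  "free_rank ((free_Abelian_group S)\<lparr>carrier := Z\<rparr> Mod B) = Sup (indep_ranks B Z)"
proof -
  let ?H = "(free_Abelian_group S)\<lparr>carrier := Z\<rparr> Mod B"
  have carrier_H: "carrier ?H = (\<lambda>z. B #>\<^bsub>FA\<^esub> z) ` Z"
    by (simp add: frag_quotient_eq)
  have rel: "finprod ?H (\<lambda>i. g i [^]\<^bsub>?H\<^esub> k i) {..<n} = \<one>\<^bsub>?H\<^esub>
      \<longleftrightarrow> (\<Sum>i<n. frag_cmul (k i) (z i)) \<in> B"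
    if "\<forall>i<n. z i \<in> Z" "\<forall>i<n. g i = B #>\<^bsub>FA\<^esub> z i" for g z k n
  proof -
    have "finprod ?H (\<lambda>i. g i [^]\<^bsub>?H\<^esub> k i) {..<n} = B #>\<^bsub>FA\<^esub> (\<Sum>i<n. frag_cmul (k i) (z i))"
      using finprod_frag_quotient[of "{..<n}" z g S k] that by simp
    moreover have "\<one>\<^bsub>?H\<^esub> = B" by simp
    ultimately show ?thesis using frag_coset_eq_iff by simp
  qed
  have "{n. \<exists>g. (\<forall>i<n. g i \<in> carrier ?H) \<and>
      (\<forall>k :: nat \<Rightarrow> int. finprod ?H (\<lambda>i. g i [^]\<^bsub>?H\<^esub> k i) {..<n} = \<one>\<^bsub>?H\<^esub> \<longrightarrow> (\<forall>i<n. k i = 0))}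
    = indep_ranks B Z"
  proof (intro equalityI subsetI)
    fix n assume "n \<in> {n. \<exists>g. (\<forall>i<n. g i \<in> carrier ?H) \<and>
      (\<forall>k :: nat \<Rightarrow> int. finprod ?H (\<lambda>i. g i [^]\<^bsub>?H\<^esub> k i) {..<n} = \<one>\<^bsub>?H\<^esub> \<longrightarrow> (\<forall>i<n. k i = 0))}"
    then obtain g where g: "\<forall>i<n. g i \<in> carrier ?H"
      "\<forall>k :: nat \<Rightarrow> int. finprod ?H (\<lambda>i. g i [^]\<^bsub>?H\<^esub> k i) {..<n} = \<one>\<^bsub>?H\<^esub> \<longrightarrow> (\<forall>i<n. k i = 0)"
      by blast
    have "\<forall>i. \<exists>z. i < n \<longrightarrow> z \<in> Z \<and> g i = B #>\<^bsub>FA\<^esub> z"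
      using g(1) unfolding carrier_H by blast
    then obtain z where z: "\<forall>i<n. z i \<in> Z" "\<forall>i<n. g i = B #>\<^bsub>FA\<^esub> z i"
      by metis
    have "indep_mod B {..<n} z"
      unfolding indep_mod_def using g(2) rel[OF z] by simp
    then show "n \<in> indep_ranks B Z" using z(1) unfolding indep_ranks_def by blast
  next
    fix n assume "n \<in> indep_ranks B Z"
    then obtain z where z: "\<forall>i<n. z i \<in> Z" "indep_mod B {..<n} z"
      unfolding indep_ranks_def by blast
    define g where "g i = B #>\<^bsub>FA\<^esub> z i" for i
    have "\<forall>i<n. g i \<in> carrier ?H" using z(1) unfolding carrier_H g_def by blast
    moreover have "\<forall>k :: nat \<Rightarrow> int. finprod ?H (\<lambda>i. g i [^]\<^bsub>?H\<^esub> k i) {..<n} = \<one>\<^bsub>?H\<^esub>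
        \<longrightarrow> (\<forall>i<n. k i = 0)"
      using z rel[of n z g] unfolding indep_mod_def g_def by simp
    ultimately show "n \<in> {n. \<exists>g. (\<forall>i<n. g i \<in> carrier ?H) \<and>
      (\<forall>k :: nat \<Rightarrow> int. finprod ?H (\<lambda>i. g i [^]\<^bsub>?H\<^esub> k i) {..<n} = \<one>\<^bsub>?H\<^esub> \<longrightarrow> (\<forall>i<n. k i = 0))}"
      by blast
  qed
  then show ?thesis unfolding free_rank_def by simp
qed

end

section \<open>Cubical chains\<close>

lemma frag_submodule_cycles: "frag_submodule (cycles d k A)"
  unfolding frag_submodule_def cycles_def chain_group_def boundary_def
  by (auto simp: frag_extend_add frag_extend_cmul dest: subsetD[OF keys_add] subsetD[OF keys_cmul])

lemma frag_submodule_boundaries: "frag_submodule (boundaries d k A)"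
  unfolding frag_submodule_def boundaries_def chain_group_def
proof (intro conjI ballI allI)
  show "0 \<in> boundary ` carrier (free_Abelian_group (kcubes_of d (Suc k) A))"
    by (rule image_eqI[of _ _ 0]) (auto simp: boundary_def)
next
  fix a b assume "a \<in> boundary ` carrier (free_Abelian_group (kcubes_of d (Suc k) A))"
     "b \<in> boundary ` carrier (free_Abelian_group (kcubes_of d (Suc k) A))"
  then obtain a' b' where "a = boundary a'" "b = boundary b'"
    "Poly_Mapping.keys a' \<subseteq> kcubes_of d (Suc k) A" "Poly_Mapping.keys b' \<subseteq> kcubes_of d (Suc k) A"
    by auto
  then show "a + b \<in> boundary ` carrier (free_Abelian_group (kcubes_of d (Suc k) A))"
    using keys_add[of a' b']
    by (intro image_eqI[of _ _ "a' + b'"]) (auto simp: boundary_def frag_extend_add)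
next
  fix a :: "elem_cube \<Rightarrow>\<^sub>0 int" and j :: int
  assume "a \<in> boundary ` carrier (free_Abelian_group (kcubes_of d (Suc k) A))"
  then obtain a' where "a = boundary a'" "Poly_Mapping.keys a' \<subseteq> kcubes_of d (Suc k) A" by auto
  then show "frag_cmul j a \<in> boundary ` carrier (free_Abelian_group (kcubes_of d (Suc k) A))"
    using keys_cmul[of j a']
    by (intro image_eqI[of _ _ "frag_cmul j a'"]) (auto simp: boundary_def frag_extend_cmul)
qed

lemma kcubes_of_mono: "X \<subseteq> Y \<Longrightarrow> kcubes_of d k X \<subseteq> kcubes_of d k Y"
  unfolding kcubes_of_def cubes_of_def by auto

lemma cycles_mono: "X \<subseteq> Y \<Longrightarrow> cycles d k X \<subseteq> cycles d k Y"
  unfolding cycles_def chain_group_def using kcubes_of_mono[of X Y d k] by auto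

lemma boundaries_mono: "X \<subseteq> Y \<Longrightarrow> boundaries d k X \<subseteq> boundaries d k Y"
  unfolding boundaries_def chain_group_def using kcubes_of_mono[of X Y d "Suc k"] by auto

lemma finite_cubes_of:
  assumes "bounded_pts A" shows "finite (cubes_of d A)"
proof -
  obtain M where M: "\<forall>x\<in>A. \<forall>i<length x. \<bar>x ! i\<bar> \<le> M" using assms unfolding bounded_pts_def by blast
  define N where "N = \<lceil>M\<rceil>"
  have "cubes_of d A \<subseteq> {xs. set xs \<subseteq> {-N..N} \<times> UNIV \<and> length xs = d}"
  proof
    fix Q assume Q: "Q \<in> cubes_of d A"
    \<comment> \<open>the corner of \<open>Q\<close> lies in \<open>A\<close>\<close>
    define p where "p = map (\<lambda>I. real_of_int (fst I)) Q"
    have "p \<in> cube_set Q" unfolding cube_set_def p_def interval_set_def by simp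
    then have pA: "p \<in> A" using Q unfolding cubes_of_def by auto
    have "set Q \<subseteq> {-N..N} \<times> UNIV"
    proof
      fix I assume "I \<in> set Q"
      then obtain i where i: "i < length Q" "Q ! i = I" by (auto simp: in_set_conv_nth)
      then have "real_of_int \<bar>fst I\<bar> \<le> M" using M pA unfolding p_def by fastforce
      moreover have "M \<le> real_of_int N" unfolding N_def by (rule le_of_int_ceiling)
      ultimately show "I \<in> {-N..N} \<times> UNIV" by (cases I) auto
    qed
    then show "Q \<in> {xs. set xs \<subseteq> {-N..N} \<times> UNIV \<and> length xs = d}"
      using Q unfolding cubes_of_def by auto
  qed
  moreover have "finite {xs. set xs \<subseteq> {-N..N} \<times> (UNIV :: bool set) \<and> length xs = d}"
    by (rule finite_lists_length_eq) auto
  ultimately show ?thesis by (rule finite_subset)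
qed

lemma finite_kcubes_of: "bounded_pts A \<Longrightarrow> finite (kcubes_of d k A)"
  using finite_cubes_of[of A d] unfolding kcubes_of_def by auto

lemma cycle_in_subset:
  assumes "c \<in> cycles d k Y"
    and "\<forall>P\<in>kcubes_of d k Y - kcubes_of d k X. poly_mapping.lookup c P = 0"
  shows "c \<in> cycles d k X"
  using assms unfolding cycles_def chain_group_def by (auto simp: in_keys_iff)

lemma boundaries_subset_plus_span:
  assumes X: "X \<subseteq> Y" and fin: "finite (kcubes_of d (Suc k) Y)"
  shows "boundaries d k Y \<subseteq> plus_span (boundaries d k X) (\<lambda>P. boundary (frag_of P))
            (kcubes_of d (Suc k) Y - kcubes_of d (Suc k) X)"
proof
  fix y assume "y \<in> boundaries d k Y"
  then obtain c where c: "y = boundary c" "Poly_Mapping.keys c \<subseteq> kcubes_of d (Suc k) Y"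
    unfolding boundaries_def chain_group_def by auto
  define T where "T = kcubes_of d (Suc k) Y - kcubes_of d (Suc k) X"
  have "Poly_Mapping.keys c \<subseteq> kcubes_of d (Suc k) X \<union> T" using c(2) unfolding T_def by auto
  then obtain a e where ae: "Poly_Mapping.keys a \<subseteq> kcubes_of d (Suc k) X"
    "Poly_Mapping.keys e \<subseteq> T" "a + e = c"
    by (rule frag_split)
  have finT: "finite T" using fin unfolding T_def by auto
  have "boundary e = (\<Sum>i\<in>Poly_Mapping.keys e. frag_cmul (poly_mapping.lookup e i) (cube_boundary i))"
    unfolding boundary_def frag_extend_def ..
  also have "\<dots> = (\<Sum>P\<in>T. frag_cmul (poly_mapping.lookup e P) (boundary (frag_of P)))"
    unfolding boundary_def frag_extend_of
    by (rule sum.mono_neutral_left[OF finT ae(2)]) (auto simp: in_keys_iff)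
  finally have "boundary e = (\<Sum>P\<in>T. frag_cmul (poly_mapping.lookup e P) (boundary (frag_of P)))" .
  moreover have "boundary a \<in> boundaries d k X"
    unfolding boundaries_def chain_group_def using ae(1) by auto
  moreover have "y = boundary a + boundary e"
    using c(1) ae(3) by (simp add: boundary_def frag_extend_add[symmetric])
  ultimately show "y \<in> plus_span (boundaries d k X) (\<lambda>P. boundary (frag_of P)) T"
    unfolding plus_span_def by (intro CollectI exI[of _ "boundary a"] exI[of _ "poly_mapping.lookup e"]) simp
qed

section \<open>Betti numbers\<close>

lemma betti_indep_ranks:
  assumes "bounded_pts A"
  shows betti_in_indep_ranks: "betti d k A \<in> indep_ranks (boundaries d k A) (cycles d k A)"
    and le_betti: "n \<in> indep_ranks (boundaries d k A) (cycles d k A) \<Longrightarrow> n \<le> betti d k A"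
proof -
  let ?R = "indep_ranks (boundaries d k A) (cycles d k A)"
  have Sup: "betti d k A = Sup ?R"
    unfolding betti_def homology_group_def chain_group_def
    by (rule free_rank_frag_quotient[OF frag_submodule_boundaries frag_submodule_cycles])
  have fin: "finite ?R"
  proof -
    have "cycles d k A \<subseteq> {c. Poly_Mapping.keys c \<subseteq> kcubes_of d k A}"
      unfolding cycles_def chain_group_def by auto
    then have "n \<le> card (kcubes_of d k A)" if "n \<in> ?R" for n
      using indep_ranks_le_card[OF that _ finite_kcubes_of[OF assms]] frag_submodule_boundaries
      unfolding frag_submodule_def by blast
    then show ?thesis unfolding finite_nat_set_iff_bounded_le by blast
  qed
  have "0 \<in> ?R" unfolding indep_ranks_def indep_mod_def by simp
  then have ne: "?R \<noteq> {}" by blast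
  show "betti d k A \<in> ?R" "n \<in> ?R \<Longrightarrow> n \<le> betti d k A"
    unfolding Sup cSup_eq_Max[OF fin ne] using Max_in[OF fin ne] Max_ge[OF fin] by simp_all
qed

lemma betti_le_add_card_new_kcubes:
  assumes XY: "X \<subseteq> Y" and bX: "bounded_pts X" and bY: "bounded_pts Y"
  shows "betti d q Y \<le> betti d q X + card (kcubes_of d q Y - kcubes_of d q X)"
proof -
  let ?S = "kcubes_of d q Y - kcubes_of d q X"
  obtain z where z: "\<forall>i<betti d q Y. z i \<in> cycles d q Y"
      "indep_mod (boundaries d q Y) {..<betti d q Y} z"
    using betti_in_indep_ranks[OF bY] unfolding indep_ranks_def by blast
  have finS: "finite ?S" using finite_kcubes_of[OF bY] by blast
  have zM: "\<forall>i\<in>{..<betti d q Y}. z i \<in> cycles d q Y" using z(1) by simp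
  obtain I' w where I': "I' \<subseteq> {..<betti d q Y}" "card {..<betti d q Y} \<le> card I' + card ?S"
      "indep_mod (boundaries d q Y) I' w" "\<forall>i\<in>I'. w i \<in> cycles d q Y"
      "\<forall>i\<in>I'. \<forall>P\<in>?S. poly_mapping.lookup (w i) P = 0"
    by (rule indep_mod_eliminate_coordinates[OF finS finite_lessThan z(2) zM frag_submodule_cycles])
  have "\<forall>i\<in>I'. w i \<in> cycles d q X" using cycle_in_subset I'(4,5) by blast
  then have "card I' \<in> indep_ranks (boundaries d q X) (cycles d q X)"
    by (rule card_in_indep_ranks[OF finite_subset[OF I'(1) finite_lessThan]
          indep_mod_antimono[OF I'(3) boundaries_mono[OF XY]]])
  then have "card I' \<le> betti d q X" by (rule le_betti[OF bX])
  then show ?thesis using I'(2) by simp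
qed

lemma betti_le_add_card_new_Suc_kcubes:
  assumes XY: "X \<subseteq> Y" and bX: "bounded_pts X" and bY: "bounded_pts Y"
  shows "betti d q X \<le> betti d q Y + card (kcubes_of d (Suc q) Y - kcubes_of d (Suc q) X)"
proof -
  let ?T = "kcubes_of d (Suc q) Y - kcubes_of d (Suc q) X"
  obtain x where x: "\<forall>i<betti d q X. x i \<in> cycles d q X"
      "indep_mod (boundaries d q X) {..<betti d q X} x"
    using betti_in_indep_ranks[OF bX] unfolding indep_ranks_def by blast
  have finT: "finite ?T" using finite_kcubes_of[OF bY] by blast
  obtain I' where I': "I' \<subseteq> {..<betti d q X}" "card {..<betti d q X} \<le> card I' + card ?T"
      "indep_mod (plus_span (boundaries d q X) (\<lambda>P. boundary (frag_of P)) ?T) I' x"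
    by (rule indep_mod_add_generators[OF finT frag_submodule_boundaries finite_lessThan x(2)])
  have "\<forall>i\<in>I'. x i \<in> cycles d q Y" using x(1) I'(1) cycles_mono[OF XY] by blast
  then have "card I' \<in> indep_ranks (boundaries d q Y) (cycles d q Y)"
    by (rule card_in_indep_ranks[OF finite_subset[OF I'(1) finite_lessThan]
          indep_mod_antimono[OF I'(3) boundaries_subset_plus_span[OF XY finite_kcubes_of[OF bY]]]])
  then have "card I' \<le> betti d q Y" by (rule le_betti[OF bY])
  then show ?thesis using I'(2) by simp
qed

lemma card_new_kcubes_le:
  assumes XY: "X \<subseteq> Y" and bY: "bounded_pts Y"
  shows "int (card (kcubes_of d q Y - kcubes_of d q X))
      + int (card (kcubes_of d (Suc q) Y - kcubes_of d (Suc q) X))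
    \<le> int (num_cubes d Y) - int (num_cubes d X)"
proof -
  let ?S = "kcubes_of d q Y - kcubes_of d q X" and ?T = "kcubes_of d (Suc q) Y - kcubes_of d (Suc q) X"
  have fin: "finite (cubes_of d Y)" by (rule finite_cubes_of[OF bY])
  have sub: "cubes_of d X \<subseteq> cubes_of d Y" using XY unfolding cubes_of_def by auto
  have ST: "?S \<union> ?T \<subseteq> cubes_of d Y - cubes_of d X" "?S \<inter> ?T = {}"
    unfolding kcubes_of_def by auto
  have "card ?S + card ?T = card (?S \<union> ?T)"
    using ST fin by (intro card_Un_disjoint[symmetric]) (auto intro: finite_subset)
  also have "\<dots> \<le> card (cubes_of d Y - cubes_of d X)"
    using ST fin by (intro card_mono) auto
  also have "\<dots> = card (cubes_of d Y) - card (cubes_of d X)"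
    using card_Diff_subset[OF finite_subset[OF sub fin] sub] .
  finally have "card ?S + card ?T \<le> num_cubes d Y - num_cubes d X"
    unfolding num_cubes_def .
  moreover have "num_cubes d X \<le> num_cubes d Y"
    unfolding num_cubes_def by (rule card_mono[OF fin sub])
  ultimately show ?thesis by linarith
qed

theorem lemma3p1:
  fixes d q :: nat and X Y :: "real list set"
  assumes "q < d"
    and "cubical d X" and "cubical d Y"
    and "bounded_pts X" and "bounded_pts Y"
    and "X \<subseteq> Y"
  shows "\<bar>int (betti d q Y) - int (betti d q X)\<bar> \<le> int (num_cubes d Y) - int (num_cubes d X)"
  using betti_le_add_card_new_kcubes[OF assms(6,4,5), of d q]
    betti_le_add_card_new_Suc_kcubes[OF assms(6,4,5), of d q]
    card_new_kcubes_le[OF assms(6,5), of d q]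
  unfolding abs_le_iff by linarith

end
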